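(* Let $(U_n)_{n\ge1}$ be a sequence in $\mathcal{U}^{(2)}$ converging to $U\in\mathcal{U}^{(2)}$. Let $((X^n(i))_{i\ge1})_{n\ge1}$ be a sequence of random infinite vectors with values in $[0,1]$, and $(X^0(i))_{i\ge1}$ a random infinite vector in $[0,1]$, such that every finite-dimensional marginal law of each of these vectors has a density with respect to Lebesgue measure. If for every $k\ge1$, $X^n_k=(X^n(1),\dots,X^n(k))$ converges in law to $X^0_k=(X^0(1),\dots,X^0(k))$, then for every $k\ge1$, $$\sigma_{U_n}(X^n_k)\longrightarrow\sigma_U(X^0_k)\quad\text{in law}.$$
   Context: $\mathcal{U}^{(2)}$ is the set of pairs $(U_\uparrow,U_\downarrow)$ of disjoint open subsets of $]0,1[$ with metric $d((U_\uparrow,U_\downarrow),(V_\uparrow,V_\downarrow))=\max(d_{Haus}(U_\uparrow^c,V_\uparrow^c),d_{Haus}(U_\downarrow^c,V_\downarrow^c))$, complements in $[0,1]$. Paintbox: for $U\in\mathcal{U}^{(2)}$ and $x_1,\dots,x_k\in[0,1]$, $\sigma_U(x_1,\dots,x_k)\in\mathfrak{S}_k$ (a permutation written as a word) is defined by $\sigma^{-1}(i)<\sigma^{-1}(j)$ iff ($x_i,x_j$ not in a common connected component of $U_\uparrow$ or of $U_\downarrow$ and $x_i<x_j$) or ($x_i,x_j$ in the same component of $U_\uparrow$ and $i<j$) or ($x_i,x_j$ in the same component of $U_\downarrow$ and $j<i$). *)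

theory Defs
  imports "HOL-Analysis.Analysis" "HOL-Probability.Probability"
begin

definition hausdist :: "real set \<Rightarrow> real set \<Rightarrow> real" where
  "hausdist A B = max (SUP a\<in>A. infdist a B) (SUP b\<in>B. infdist b A)"

text \<open>The space U^(2): pairs (U_up, U_down) of disjoint open subsets of ]0,1[.\<close>
definition U2 :: "(real set \<times> real set) set" where
  "U2 = {(Uu, Ud). open Uu \<and> open Ud \<and> Uu \<subseteq> {0<..<1} \<and> Ud \<subseteq> {0<..<1} \<and> Uu \<inter> Ud = {}}"

definition dU2 :: "real set \<times> real set \<Rightarrow> real set \<times> real set \<Rightarrow> real" where
  "dU2 U V = max (hausdist ({0..1} - fst U) ({0..1} - fst V))
                 (hausdist ({0..1} - snd U) ({0..1} - snd V))"

text \<open>Ordering relation of the paintbox: index i is placed before index j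
  (i.e. sigma^{-1}(i) < sigma^{-1}(j)). Points are x 1, ..., x k.\<close>
definition pb_before :: "real set \<times> real set \<Rightarrow> (nat \<Rightarrow> real) \<Rightarrow> nat \<Rightarrow> nat \<Rightarrow> bool" where
  "pb_before U x i j \<longleftrightarrow>
     (\<not> connected_component (fst U) (x i) (x j) \<and> \<not> connected_component (snd U) (x i) (x j) \<and> x i < x j)
   \<or> (connected_component (fst U) (x i) (x j) \<and> i < j)
   \<or> (connected_component (snd U) (x i) (x j) \<and> j < i)"

text \<open>The paintbox permutation sigma_U(x 1, ..., x k) in S_k, written as a word
  (the list [sigma(1), ..., sigma(k)]); w ! p = sigma(p+1), so sigma^{-1}(i) < sigma^{-1}(j) iff i occurs before j.\<close>
definition paintbox :: "real set \<times> real set \<Rightarrow> nat \<Rightarrow> (nat \<Rightarrow> real) \<Rightarrow> nat list" where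
  "paintbox U k x = (THE w. distinct w \<and> set w = {1..k} \<and>
      (\<forall>p<k. \<forall>q<k. (p < q \<longleftrightarrow> pb_before U x (w ! p) (w ! q))))"

definition vec_emb :: "nat \<Rightarrow> (nat \<Rightarrow> real) \<Rightarrow> (nat \<Rightarrow> real)" where
  "vec_emb k x = (\<lambda>i. if i \<in> {1..k} then x i else 0)"

end

theory Submission
  imports Defs
begin

text \<open>
  The word \<open>paintbox U k x\<close> is determined by finitely many comparisons of the coordinates of
  \<open>x\<close>: their order, and whether two of them lie in one component of \<open>fst U\<close> or of \<open>snd U\<close>.
  If the coordinates are distinct and avoid the countably many endpoints of components, every
  comparison is locally constant jointly in \<open>x\<close> and in \<open>U\<close> (for the Hausdorff distance of
  the complements), so \<open>paintbox (Us n) k y = paintbox U k x\<close> for all \<open>y\<close> near \<open>x\<close> once \<open>n\<close> is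
  large. A vector with a density is such a point almost surely. A portmanteau argument then gives
  \<open>liminf P(paintbox (Us n) k (X n) \<in> S) \<ge> P(paintbox U k X0 \<in> S)\<close> for every set \<open>S\<close> of words,
  and applying this to \<open>{w}\<close> and to its complement yields convergence.
\<close>

section \<open>The paintbox word depends on finitely many comparisons\<close>

definition paintbox_rel :: "real set \<times> real set \<Rightarrow> nat \<Rightarrow> (nat \<Rightarrow> real) \<Rightarrow> nat \<Rightarrow> nat \<Rightarrow> bool" where
  "paintbox_rel V k x i j \<longleftrightarrow> i \<in> {1..k} \<and> j \<in> {1..k} \<and> pb_before V x i j"

definition word_of_rel :: "nat \<Rightarrow> (nat \<Rightarrow> nat \<Rightarrow> bool) \<Rightarrow> nat list" where
  "word_of_rel k r = (THE w. distinct w \<and> set w = {1..k} \<and> (\<forall>p<k. \<forall>q<k. p < q \<longleftrightarrow> r (w ! p) (w ! q)))"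

definition rels_on :: "nat \<Rightarrow> (nat \<Rightarrow> nat \<Rightarrow> bool) set" where
  "rels_on k = {r. \<forall>i j. r i j \<longrightarrow> i \<in> {1..k} \<and> j \<in> {1..k}}"

lemma paintbox_eq_word_of_rel: "paintbox V k x = word_of_rel k (paintbox_rel V k x)"
proof -
  have "w ! p \<in> {1..k}" if "distinct w" "set w = {1..k}" "p < k" for w :: "nat list" and p
    using that distinct_card[OF that(1)] by (metis card_atLeastAtMost diff_Suc_1 nth_mem)
  then show ?thesis
    unfolding paintbox_def word_of_rel_def paintbox_rel_def by (metis (opaque_lifting))
qed

lemma paintbox_cong:
  assumes "\<And>i j. i \<in> {1..k} \<Longrightarrow> j \<in> {1..k} \<Longrightarrow> pb_before V x i j = pb_before V' y i j"
  shows "paintbox V k x = paintbox V' k y"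
proof -
  have "paintbox_rel V k x = paintbox_rel V' k y"
    using assms unfolding paintbox_rel_def by (intro ext) blast
  then show ?thesis by (simp add: paintbox_eq_word_of_rel)
qed

lemma paintbox_vec_emb: "paintbox V k (vec_emb k x) = paintbox V k x"
  by (rule paintbox_cong) (auto simp: pb_before_def vec_emb_def)

lemma finite_rels_on: "finite (rels_on k)"
proof (rule finite_subset)
  show "rels_on k \<subseteq> (\<lambda>S i j. (i, j) \<in> S) ` Pow ({1..k} \<times> {1..k})"
    unfolding rels_on_def by (auto intro!: image_eqI[where x = "{(i, j). _ i j}"])
qed simp

lemma paintbox_rel_in_rels_on: "paintbox_rel V k x \<in> rels_on k"
  by (simp add: paintbox_rel_def rels_on_def)

lemma open_connected_component_rel:
  fixes Op :: "'a::real_normed_vector set"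
  assumes "open Op"
  shows "open {p. connected_component Op (fst p) (snd p)}"
proof (rule Topological_Spaces.openI)
  fix p assume "p \<in> {p. connected_component Op (fst p) (snd p)}"
  then have cc: "connected_component Op (fst p) (snd p)" by simp
  define C where "C = connected_component_set Op (fst p)"
  have "open (C \<times> C)" using open_connected_component[OF assms] by (simp add: C_def open_Times)
  moreover have "p \<in> C \<times> C"
    using cc by (auto simp: C_def mem_Times_iff connected_component_in connected_component_refl_eq)
  moreover have "C \<times> C \<subseteq> {p. connected_component Op (fst p) (snd p)}"
    unfolding C_def by clarsimp (meson connected_component_sym connected_component_trans)
  ultimately show "\<exists>T. open T \<and> p \<in> T \<and> T \<subseteq> {p. connected_component Op (fst p) (snd p)}"
    by blast
qed

lemma sets_Collect_connected_component:
  fixes Op :: "real set"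
  assumes "open Op" "f \<in> borel_measurable M" "g \<in> borel_measurable M"
  shows "{\<omega> \<in> space M. connected_component Op (f \<omega>) (g \<omega>)} \<in> sets M"
proof -
  have "{p. connected_component Op (fst p) (snd p)} \<in> sets borel"
    using borel_open[OF open_connected_component_rel[OF assms(1)]] .
  from measurable_sets[OF borel_measurable_Pair[OF assms(2,3)] this] show ?thesis
    by (simp add: vimage_def Int_def conj_commute)
qed

lemma sets_Collect_pb_before:
  assumes "V \<in> U2" "(\<lambda>\<omega>. X \<omega> i) \<in> borel_measurable M" "(\<lambda>\<omega>. X \<omega> j) \<in> borel_measurable M"
  shows "{\<omega> \<in> space M. pb_before V (X \<omega>) i j} \<in> sets M"
proof -
  have "open (fst V)" "open (snd V)" using assms(1) by (auto simp: U2_def)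
  then show ?thesis
    unfolding pb_before_def using assms(2,3)
    by (intro sets.sets_Collect_disj sets.sets_Collect_conj sets.sets_Collect_neg
        sets.sets_Collect_const sets_Collect_connected_component borel_measurable_less)
qed

lemma sets_Collect_paintbox:
  assumes "V \<in> U2" "\<And>i. i \<in> {1..k} \<Longrightarrow> (\<lambda>\<omega>. X \<omega> i) \<in> borel_measurable M"
  shows "{\<omega> \<in> space M. paintbox V k (X \<omega>) \<in> S} \<in> sets M"
proof -
  have "{\<omega> \<in> space M. paintbox V k (X \<omega>) \<in> S} =
     {\<omega> \<in> space M. \<exists>r\<in>rels_on k \<inter> {r. word_of_rel k r \<in> S}.
        \<forall>i\<in>{1..k}. \<forall>j\<in>{1..k}. pb_before V (X \<omega>) i j = r i j}"
  proof safe
    fix \<omega> assume "paintbox V k (X \<omega>) \<in> S"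
    then show "\<exists>r\<in>rels_on k \<inter> {r. word_of_rel k r \<in> S}.
        \<forall>i\<in>{1..k}. \<forall>j\<in>{1..k}. pb_before V (X \<omega>) i j = r i j"
      by (intro bexI[of _ "paintbox_rel V k (X \<omega>)"])
        (auto simp: paintbox_eq_word_of_rel paintbox_rel_def paintbox_rel_in_rels_on)
  next
    fix \<omega> r assume "r \<in> rels_on k" "word_of_rel k r \<in> S"
      and "\<forall>i\<in>{1..k}. \<forall>j\<in>{1..k}. pb_before V (X \<omega>) i j = r i j"
    then have "paintbox_rel V k (X \<omega>) = r"
      unfolding paintbox_rel_def rels_on_def by (intro ext) blast
    with \<open>word_of_rel k r \<in> S\<close> show "paintbox V k (X \<omega>) \<in> S" by (simp add: paintbox_eq_word_of_rel)
  qed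
  also have "\<dots> \<in> sets M"
  proof (intro sets.sets_Collect_finite_Ex sets.sets_Collect_finite_All)
    fix r i j assume "i \<in> {1..k}" "j \<in> {1..k}"
    then have "{\<omega> \<in> space M. pb_before V (X \<omega>) i j} \<in> sets M"
      using assms by (intro sets_Collect_pb_before) auto
    then show "{\<omega> \<in> space M. pb_before V (X \<omega>) i j = r i j} \<in> sets M"
      by (cases "r i j") (simp_all add: sets.sets_Collect_neg)
  qed (auto intro: finite_subset[OF _ finite_rels_on])
  finally show ?thesis .
qed

section \<open>Endpoints of components\<close>

definition edge_points :: "real set \<Rightarrow> real set" where
  "edge_points Op = {t. t \<notin> Op \<and> (\<exists>e>0. {t<..<t+e} \<subseteq> Op \<or> {t-e<..<t} \<subseteq> Op)}"

lemma countable_left_edge_points: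
  fixes Op :: "real set"
  shows "countable {t. t \<notin> Op \<and> (\<exists>e>0. {t<..<t+e} \<subseteq> Op)}"
    (is "countable ?L")
proof -
  txt \<open>Above each point of \<open>?L\<close> lies a rational below every later point of \<open>?L\<close>.\<close>
  have "\<forall>t\<in>?L. \<exists>q. q \<in> \<rat> \<and> t < q \<and> (\<forall>s. s \<notin> Op \<and> t < s \<longrightarrow> q < s)"
  proof
    fix t assume "t \<in> ?L"
    then obtain e where "e > 0" "{t<..<t+e} \<subseteq> Op" by blast
    moreover obtain q where "q \<in> \<rat>" "t < q" "q < t + e"
      using Rats_dense_in_real[of t "t + e"] \<open>e > 0\<close> by auto
    ultimately show "\<exists>q. q \<in> \<rat> \<and> t < q \<and> (\<forall>s. s \<notin> Op \<and> t < s \<longrightarrow> q < s)"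
      by (intro exI[of _ q]) (force simp: subset_eq)
  qed
  from bchoice[OF this] obtain q
    where q: "\<forall>t\<in>?L. q t \<in> \<rat> \<and> t < q t \<and> (\<forall>s. s \<notin> Op \<and> t < s \<longrightarrow> q t < s)"
    by blast
  have "strict_mono_on ?L q"
  proof (rule strict_mono_onI)
    fix a b assume "a \<in> ?L" "b \<in> ?L" "a < b"
    then have "q a < b" using q by blast
    also have "b < q b" using q \<open>b \<in> ?L\<close> by blast
    finally show "q a < q b" .
  qed
  then have "inj_on q ?L" by (rule strict_mono_on_imp_inj_on)
  moreover have "countable (q ` ?L)" using q by (intro countable_subset[OF _ countable_rat]) auto
  ultimately show ?thesis by (blast intro: countable_image_inj_on)
qed

lemma countable_edge_points: "countable (edge_points Op)"
proof -
  txt \<open>Right endpoints of components of \<open>Op\<close> are left endpoints for the reflection of \<open>Op\<close>.\<close>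
  let ?L = "\<lambda>Op. {t::real. t \<notin> Op \<and> (\<exists>e>0. {t<..<t+e} \<subseteq> Op)}"
  have "edge_points Op \<subseteq> ?L Op \<union> uminus ` ?L (uminus ` Op)"
  proof
    fix t assume "t \<in> edge_points Op"
    then obtain e where t: "t \<notin> Op" "e > 0" "{t<..<t+e} \<subseteq> Op \<or> {t-e<..<t} \<subseteq> Op"
      unfolding edge_points_def by blast
    have "{-t<..<-t+e} \<subseteq> uminus ` Op" if "{t-e<..<t} \<subseteq> Op"
    proof
      fix x assume "x \<in> {-t<..<-t+e}"
      then have "-x \<in> Op" using that by auto
      then show "x \<in> uminus ` Op" by (metis image_eqI minus_minus)
    qed
    moreover have "-t \<notin> uminus ` Op" using t(1) by auto
    ultimately consider "t \<in> ?L Op" | "-t \<in> ?L (uminus ` Op)" using t by auto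
    then show "t \<in> ?L Op \<union> uminus ` ?L (uminus ` Op)"
    proof cases
      case 2
      then have "- (- t) \<in> uminus ` ?L (uminus ` Op)" by (rule imageI)
      then show ?thesis by simp
    qed simp
  qed
  then show ?thesis
    by (rule countable_subset) (simp add: countable_left_edge_points)
qed

section \<open>Stability of the comparisons\<close>

lemma hausdist_sym: "hausdist A B = hausdist B A"
  unfolding hausdist_def by (simp add: max.commute)

lemma infdist_le_hausdist:
  assumes "bounded A" "B \<noteq> {}" "a \<in> A"
  shows "infdist a B \<le> hausdist A B"
proof -
  obtain b where "b \<in> B" using assms(2) by blast
  obtain r where r: "\<forall>x\<in>A. norm x \<le> r" using assms(1) by (auto simp: bounded_iff)
  have "infdist x B \<le> r + norm b" if "x \<in> A" for x
  proof -
    have "infdist x B \<le> dist x b" by (rule infdist_le[OF \<open>b \<in> B\<close>])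
    also have "\<dots> \<le> norm x + norm b" by (simp add: dist_norm norm_triangle_ineq4)
    finally show ?thesis using r that by (meson add_right_mono order_trans)
  qed
  then have "bdd_above ((\<lambda>x. infdist x B) ` A)" by (intro bdd_aboveI2)
  from cSUP_upper[OF assms(3) this] show ?thesis unfolding hausdist_def by simp
qed

lemma hausdist_close_point:
  assumes "bounded A" "B \<noteq> {}" "a \<in> A" "hausdist A B < r"
  obtains b where "b \<in> B" "\<bar>a - b\<bar> < r"
proof -
  have "(INF b\<in>B. dist a b) < r"
    using infdist_le_hausdist[OF assms(1-3)] assms(2,4) by (simp add: infdist_def)
  then obtain b where "b \<in> B" "dist a b < r"
    using cInf_lessD[of "(\<lambda>b. dist a b) ` B" r] assms(2) by auto
  then show ?thesis using that by (simp add: dist_real_def)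
qed

lemma connected_component_between:
  fixes Op :: "real set"
  assumes "connected_component Op a b" "a \<le> z" "z \<le> b"
  shows "z \<in> Op"
proof -
  obtain T where "connected T" "T \<subseteq> Op" "a \<in> T" "b \<in> T"
    using assms(1) unfolding connected_component_def by blast
  with assms(2,3) show ?thesis using connected_iff_interval by blast
qed

lemma eventually_connected_component_stable:
  fixes Op :: "real set"
  assumes Op: "open Op" "Op \<subseteq> {0<..<1}" and cc: "connected_component Op x1 x2"
  shows "\<forall>\<^sub>F \<delta> in at_right 0. \<forall>Op' y1 y2. hausdist ({0..1} - Op) ({0..1} - Op') < \<delta> \<longrightarrow>
           \<bar>y1 - x1\<bar> < \<delta> \<longrightarrow> \<bar>y2 - x2\<bar> < \<delta> \<longrightarrow> connected_component Op' y1 y2"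
proof -
  define a b where "a = min x1 x2" and "b = max x1 x2"
  have ab: "a \<le> x1" "a \<le> x2" "x1 \<le> b" "x2 \<le> b" by (simp_all add: a_def b_def)
  have "{a..b} \<subseteq> Op"
  proof
    fix z assume "z \<in> {a..b}"
    then consider "x1 \<le> z" "z \<le> x2" | "x2 \<le> z" "z \<le> x1" by (fastforce simp: a_def b_def)
    then show "z \<in> Op"
      by cases (use connected_component_between cc connected_component_sym in metis)+
  qed
  then obtain \<epsilon> where \<epsilon>: "\<epsilon> > 0" "(\<Union>c\<in>{a..b}. ball c \<epsilon>) \<subseteq> Op"
    by (rule compact_subset_open_imp_ball_epsilon_subset[OF compact_Icc Op(1)])
  have thick: "z \<in> Op" if "a - \<epsilon> < z" "z < b + \<epsilon>" for z
  proof -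
    define c where "c = max a (min b z)"
    have "a \<le> b" using ab by linarith
    then have "c \<in> {a..b}" "z \<in> ball c \<epsilon>"
      using that \<epsilon>(1) by (auto simp: c_def dist_real_def max_def min_def)
    then show ?thesis using \<epsilon>(2) by blast
  qed
  have bdd: "bounded ({0..1} - S)" for S :: "real set"
    by (rule bounded_diff[OF compact_imp_bounded[OF compact_Icc]])
  show ?thesis
    unfolding eventually_at_right_field
  proof (intro exI[of _ "\<epsilon> / 2"] conjI allI impI)
    fix \<delta> Op' y1 y2
    assume \<delta>: "0 < \<delta>" "\<delta> < \<epsilon> / 2" and H: "hausdist ({0..1} - Op) ({0..1} - Op') < \<delta>"
      and y: "\<bar>y1 - x1\<bar> < \<delta>" "\<bar>y2 - x2\<bar> < \<delta>"
    have "{a-\<delta>..b+\<delta>} \<subseteq> Op'"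
    proof
      fix z assume z: "z \<in> {a-\<delta>..b+\<delta>}"
      show "z \<in> Op'"
      proof (rule ccontr)
        assume "z \<notin> Op'"
        moreover have "z \<in> Op" using z \<delta> by (intro thick) auto
        ultimately have z': "z \<in> {0..1} - Op'" using Op(2) by auto
        have ne: "{0..1} - Op \<noteq> {}" using Op(2) by force
        have H': "hausdist ({0..1} - Op') ({0..1} - Op) < \<delta>" using H by (subst hausdist_sym)
        obtain u where u: "u \<in> {0..1} - Op" "\<bar>z - u\<bar> < \<delta>"
          by (rule hausdist_close_point[OF bdd ne z' H'])
        have "u \<in> Op" using u(2) z \<delta> by (intro thick) (auto simp: abs_less_iff)
        then show False using u(1) by blast
      qed
    qed
    moreover have "y1 \<in> {a-\<delta>..b+\<delta>}" "y2 \<in> {a-\<delta>..b+\<delta>}" using y ab by (auto simp: abs_less_iff)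
    ultimately show "connected_component Op' y1 y2" by (intro connected_componentI[OF connected_Icc])
  qed (use \<epsilon> in simp)
qed

lemma eventually_not_connected_component_stable:
  fixes Op :: "real set"
  assumes z: "z \<in> {0..1} - Op" "x1 < z" "z < x2"
  shows "\<forall>\<^sub>F \<delta> in at_right 0. \<forall>Op' y1 y2. Op' \<subseteq> {0<..<1} \<longrightarrow>
           hausdist ({0..1} - Op) ({0..1} - Op') < \<delta> \<longrightarrow>
           \<bar>y1 - x1\<bar> < \<delta> \<longrightarrow> \<bar>y2 - x2\<bar> < \<delta> \<longrightarrow> \<not> connected_component Op' y1 y2"
  unfolding eventually_at_right_field
proof (intro exI[of _ "min (z - x1) (x2 - z) / 2"] conjI allI impI)
  fix \<delta> Op' y1 y2
  assume \<delta>: "0 < \<delta>" "\<delta> < min (z - x1) (x2 - z) / 2" and Op': "Op' \<subseteq> {0<..<1}"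
    and H: "hausdist ({0..1} - Op) ({0..1} - Op') < \<delta>" and y: "\<bar>y1 - x1\<bar> < \<delta>" "\<bar>y2 - x2\<bar> < \<delta>"
  have ne: "{0..1} - Op' \<noteq> {}" using Op' by force
  obtain u where u: "u \<in> {0..1} - Op'" "\<bar>z - u\<bar> < \<delta>"
    by (rule hausdist_close_point[OF bounded_diff[OF compact_imp_bounded[OF compact_Icc]] ne z(1) H])
  then have "y1 \<le> u" "u \<le> y2" using \<delta> y by (auto simp: abs_less_iff)
  then show "\<not> connected_component Op' y1 y2" using connected_component_between u(1) by blast
qed (use z in simp)

lemma exists_gap_between_non_edge_points:
  fixes Op :: "real set"
  assumes "x1 < x2" "x1 \<in> {0..1}" "x2 \<in> {0..1}" "\<not> connected_component Op x1 x2"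
    "x1 \<notin> edge_points Op" "x2 \<notin> edge_points Op"
  obtains z where "z \<in> {0..1} - Op" "x1 < z" "z < x2"
proof -
  have False if gap: "{x1<..<x2} \<subseteq> Op"
  proof -
    have "\<exists>e>0. {x1<..<x1+e} \<subseteq> Op" "\<exists>e>0. {x2-e<..<x2} \<subseteq> Op"
      using assms(1) gap by (auto intro!: exI[of _ "x2 - x1"])
    then have "x1 \<in> Op" "x2 \<in> Op" using assms(5,6) unfolding edge_points_def by auto
    with gap have "{x1..x2} \<subseteq> Op" by (auto simp: less_eq_real_def)
    then show False using assms(1,4) by (auto intro: connected_componentI[OF connected_Icc])
  qed
  then show ?thesis using that assms(2,3) by force
qed

lemma eventually_connected_component_iff:
  fixes Op :: "real set"
  assumes Op: "open Op" "Op \<subseteq> {0<..<1}" and x: "x1 \<in> {0..1}" "x2 \<in> {0..1}" "x1 \<noteq> x2"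
    "x1 \<notin> edge_points Op" "x2 \<notin> edge_points Op"
  shows "\<forall>\<^sub>F \<delta> in at_right 0. \<forall>Op' y1 y2. Op' \<subseteq> {0<..<1} \<longrightarrow>
           hausdist ({0..1} - Op) ({0..1} - Op') < \<delta> \<longrightarrow> \<bar>y1 - x1\<bar> < \<delta> \<longrightarrow> \<bar>y2 - x2\<bar> < \<delta> \<longrightarrow>
           (connected_component Op' y1 y2 \<longleftrightarrow> connected_component Op x1 x2)"
proof (cases "connected_component Op x1 x2")
  case True
  from eventually_connected_component_stable[OF Op True] show ?thesis
    by eventually_elim (simp add: True)
next
  case False
  then have "\<not> connected_component Op x2 x1" by (blast intro: connected_component_sym)
  consider "x1 < x2" | "x2 < x1" using x(3) by linarith
  then show ?thesis
  proof cases
    case 1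
    with x False obtain z where "z \<in> {0..1} - Op" "x1 < z" "z < x2"
      by (blast elim: exists_gap_between_non_edge_points)
    from eventually_not_connected_component_stable[OF this] show ?thesis
      by eventually_elim (simp add: False)
  next
    case 2
    with x \<open>\<not> connected_component Op x2 x1\<close> obtain z where "z \<in> {0..1} - Op" "x2 < z" "z < x1"
      by (blast elim: exists_gap_between_non_edge_points)
    from eventually_not_connected_component_stable[OF this] show ?thesis
      by eventually_elim (metis False connected_component_sym)
  qed
qed


lemma hausdist_fst_le_dU2: "hausdist ({0..1} - fst U) ({0..1} - fst V) \<le> dU2 V U"
  unfolding dU2_def by (simp add: hausdist_sym)

lemma hausdist_snd_le_dU2: "hausdist ({0..1} - snd U) ({0..1} - snd V) \<le> dU2 V U"
  unfolding dU2_def by (simp add: hausdist_sym)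

definition generic_points :: "real set \<times> real set \<Rightarrow> nat \<Rightarrow> (nat \<Rightarrow> real) set" where
  "generic_points U k = {x. \<forall>i\<in>{1..k}. x i \<in> {0..1} \<and> x i \<notin> edge_points (fst U) \<and>
     x i \<notin> edge_points (snd U) \<and> (\<forall>j\<in>{1..k}. j \<noteq> i \<longrightarrow> x j \<noteq> x i)}"

lemma eventually_less_iff_stable:
  fixes x1 x2 :: real
  assumes "x1 \<noteq> x2"
  shows "\<forall>\<^sub>F \<delta> in at_right 0. \<forall>y1 y2. \<bar>y1 - x1\<bar> < \<delta> \<longrightarrow> \<bar>y2 - x2\<bar> < \<delta> \<longrightarrow> (y1 < y2 \<longleftrightarrow> x1 < x2)"
  unfolding eventually_at_right_field
  using assms by (intro exI[of _ "\<bar>x1 - x2\<bar> / 2"]) (auto simp: abs_less_iff abs_if)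

lemma eventually_pb_before_stable:
  assumes U: "U \<in> U2" and x: "x \<in> generic_points U k" and ij: "i \<in> {1..k}" "j \<in> {1..k}"
  shows "\<forall>\<^sub>F \<delta> in at_right 0. \<forall>V y. V \<in> U2 \<longrightarrow> dU2 V U < \<delta> \<longrightarrow>
           \<bar>y i - x i\<bar> < \<delta> \<longrightarrow> \<bar>y j - x j\<bar> < \<delta> \<longrightarrow> pb_before V y i j = pb_before U x i j"
proof (cases "i = j")
  case False
  have xij: "x i \<in> {0..1}" "x j \<in> {0..1}" "x i \<noteq> x j"
    "x i \<notin> edge_points (fst U)" "x j \<notin> edge_points (fst U)"
    "x i \<notin> edge_points (snd U)" "x j \<notin> edge_points (snd U)"
    using x ij False unfolding generic_points_def by auto
  have Uo: "open (fst U)" "fst U \<subseteq> {0<..<1}" "open (snd U)" "snd U \<subseteq> {0<..<1}"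
    using U unfolding U2_def by auto
  have "\<forall>\<^sub>F \<delta> in at_right 0. \<forall>Op' y1 y2. Op' \<subseteq> {0<..<1} \<longrightarrow>
           hausdist ({0..1} - fst U) ({0..1} - Op') < \<delta> \<longrightarrow> \<bar>y1 - x i\<bar> < \<delta> \<longrightarrow> \<bar>y2 - x j\<bar> < \<delta> \<longrightarrow>
           (connected_component Op' y1 y2 \<longleftrightarrow> connected_component (fst U) (x i) (x j))"
    "\<forall>\<^sub>F \<delta> in at_right 0. \<forall>Op' y1 y2. Op' \<subseteq> {0<..<1} \<longrightarrow>
           hausdist ({0..1} - snd U) ({0..1} - Op') < \<delta> \<longrightarrow> \<bar>y1 - x i\<bar> < \<delta> \<longrightarrow> \<bar>y2 - x j\<bar> < \<delta> \<longrightarrow>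
           (connected_component Op' y1 y2 \<longleftrightarrow> connected_component (snd U) (x i) (x j))"
    using eventually_connected_component_iff[OF Uo(1,2) xij(1-5)]
      eventually_connected_component_iff[OF Uo(3,4) xij(1-3,6,7)] by simp_all
  moreover have "\<forall>\<^sub>F \<delta> in at_right 0. \<forall>y1 y2. \<bar>y1 - x i\<bar> < \<delta> \<longrightarrow> \<bar>y2 - x j\<bar> < \<delta> \<longrightarrow>
      (y1 < y2 \<longleftrightarrow> x i < x j)"
    using xij(3) by (rule eventually_less_iff_stable)
  ultimately show ?thesis
  proof eventually_elim
    case (elim \<delta>)
    show ?case
    proof (intro allI impI)
      fix V y assume V: "V \<in> U2" "dU2 V U < \<delta>" "\<bar>y i - x i\<bar> < \<delta>" "\<bar>y j - x j\<bar> < \<delta>"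
      have "fst V \<subseteq> {0<..<1}" "snd V \<subseteq> {0<..<1}" using V(1) unfolding U2_def by auto
      then show "pb_before V y i j = pb_before U x i j"
        using elim(1)[rule_format, of "fst V" "y i" "y j"] elim(2)[rule_format, of "snd V" "y i" "y j"]
          elim(3)[rule_format, of "y i" "y j"] V(2-4) hausdist_fst_le_dU2[of U V] hausdist_snd_le_dU2[of U V]
        unfolding pb_before_def by auto
    qed
  qed
qed (simp add: pb_before_def)

definition l1_dist :: "nat \<Rightarrow> (nat \<Rightarrow> real) \<Rightarrow> (nat \<Rightarrow> real) \<Rightarrow> real" where
  "l1_dist k x y = (\<Sum>i\<in>{1..k}. \<bar>x i - y i\<bar>)"

lemma abs_le_l1_dist: "l \<in> {1..k} \<Longrightarrow> \<bar>x l - y l\<bar> \<le> l1_dist k x y"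
  unfolding l1_dist_def by (rule member_le_sum) auto

lemma paintbox_locally_constant:
  assumes U: "U \<in> U2" and Us: "\<And>n. Us n \<in> U2" and conv: "(\<lambda>n. dU2 (Us n) U) \<longlonglongrightarrow> 0"
    and x: "x \<in> generic_points U k"
  shows "\<exists>\<epsilon>>0. \<forall>\<^sub>F n in sequentially. \<forall>y. l1_dist k x y < \<epsilon> \<longrightarrow> paintbox (Us n) k y = paintbox U k x"
proof -
  have "\<forall>\<^sub>F \<delta> in at_right 0. \<forall>p\<in>{1..k} \<times> {1..k}. \<forall>V y. V \<in> U2 \<longrightarrow> dU2 V U < \<delta> \<longrightarrow>
      \<bar>y (fst p) - x (fst p)\<bar> < \<delta> \<longrightarrow> \<bar>y (snd p) - x (snd p)\<bar> < \<delta> \<longrightarrow>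
      pb_before V y (fst p) (snd p) = pb_before U x (fst p) (snd p)"
    using eventually_pb_before_stable[OF U x] by (intro eventually_ball_finite) auto
  then obtain b where "b > 0" and stable: "\<And>\<delta>. 0 < \<delta> \<Longrightarrow> \<delta> < b \<Longrightarrow> \<forall>p\<in>{1..k} \<times> {1..k}. \<forall>V y.
      V \<in> U2 \<longrightarrow> dU2 V U < \<delta> \<longrightarrow> \<bar>y (fst p) - x (fst p)\<bar> < \<delta> \<longrightarrow> \<bar>y (snd p) - x (snd p)\<bar> < \<delta> \<longrightarrow>
      pb_before V y (fst p) (snd p) = pb_before U x (fst p) (snd p)"
    unfolding eventually_at_right_field by blast
  define \<delta> where "\<delta> = b / 2"
  have \<delta>: "0 < \<delta>" "\<delta> < b" using \<open>b > 0\<close> by (simp_all add: \<delta>_def)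
  have "\<forall>\<^sub>F n in sequentially. dU2 (Us n) U < \<delta>" using order_tendstoD(2)[OF conv \<delta>(1)] .
  then have "\<forall>\<^sub>F n in sequentially. \<forall>y. l1_dist k x y < \<delta> \<longrightarrow> paintbox (Us n) k y = paintbox U k x"
  proof eventually_elim
    case (elim n)
    show ?case
    proof (intro allI impI)
      fix y assume "l1_dist k x y < \<delta>"
      then have y: "\<bar>y l - x l\<bar> < \<delta>" if "l \<in> {1..k}" for l
        using abs_le_l1_dist[OF that, of x y] by (simp add: abs_minus_commute)
      show "paintbox (Us n) k y = paintbox U k x"
      proof (rule paintbox_cong)
        fix i j assume "i \<in> {1..k}" "j \<in> {1..k}"
        then show "pb_before (Us n) y i j = pb_before U x i j"
          using stable[OF \<delta>, rule_format, of "(i, j)" "Us n" y] elim Us[of n] y by simp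
      qed
    qed
  qed
  with \<delta>(1) show ?thesis by blast
qed

section \<open>A portmanteau lower bound\<close>

lemma l1_dist_nonneg: "0 \<le> l1_dist k x y"
  unfolding l1_dist_def by (simp add: sum_nonneg)

lemma l1_dist_commute: "l1_dist k x y = l1_dist k y x"
  unfolding l1_dist_def by (simp add: abs_minus_commute)

lemma l1_dist_triangle: "l1_dist k x z \<le> l1_dist k x y + l1_dist k y z"
  unfolding l1_dist_def sum.distrib[symmetric] by (intro sum_mono) arith

lemma continuous_on_l1_dist: "continuous_on UNIV (l1_dist k a)"
  unfolding l1_dist_def
  by (intro continuous_on_sum continuous_on_rabs continuous_on_diff continuous_on_const
      continuous_on_product_coordinates)

lemma continuous_on_l1_lipschitz:
  fixes f :: "(nat \<Rightarrow> real) \<Rightarrow> real"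
  assumes "\<And>y y'. \<bar>f y - f y'\<bar> \<le> l1_dist k y y'"
  shows "continuous_on UNIV f"
  unfolding continuous_on_eq_continuous_at[OF open_UNIV] isCont_def
proof (intro ballI tendstoI)
  fix x :: "nat \<Rightarrow> real" and e :: real assume "0 < e"
  show "\<forall>\<^sub>F y in at x. dist (f y) (f x) < e"
    unfolding eventually_at_topological
  proof (intro exI[of _ "{y. l1_dist k x y < e}"] conjI ballI impI)
    show "open {y. l1_dist k x y < e}"
      by (rule open_Collect_less[OF continuous_on_l1_dist continuous_on_const])
    show "x \<in> {y. l1_dist k x y < e}" using \<open>0 < e\<close> by (simp add: l1_dist_def)
    fix y assume "y \<in> {y. l1_dist k x y < e}"
    then show "dist (f y) (f x) < e" using assms[of y x] by (simp add: dist_real_def l1_dist_commute)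
  qed
qed

definition l1_infdist :: "nat \<Rightarrow> (nat \<Rightarrow> real) set \<Rightarrow> (nat \<Rightarrow> real) \<Rightarrow> real" where
  "l1_infdist k S y = (INF a\<in>S. l1_dist k a y)"

lemma bdd_below_l1_dist: "bdd_below ((\<lambda>a. l1_dist k a y) ` S)"
  by (rule bdd_belowI2[of _ 0]) (rule l1_dist_nonneg)

lemma l1_infdist_nonneg: "S \<noteq> {} \<Longrightarrow> 0 \<le> l1_infdist k S y"
  unfolding l1_infdist_def by (intro cInf_greatest) (auto simp: l1_dist_nonneg)

lemma l1_infdist_le: "a \<in> S \<Longrightarrow> l1_infdist k S y \<le> l1_dist k a y"
  unfolding l1_infdist_def by (intro cInf_lower imageI bdd_below_l1_dist)

lemma l1_infdist_zero: "a \<in> S \<Longrightarrow> l1_infdist k S a = 0"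
  using l1_infdist_le[of a S k a] l1_infdist_nonneg[of S k a] by (auto simp: l1_dist_def)

lemma l1_infdist_antimono: "S \<noteq> {} \<Longrightarrow> S \<subseteq> T \<Longrightarrow> l1_infdist k T y \<le> l1_infdist k S y"
  unfolding l1_infdist_def by (intro cInf_superset_mono bdd_below_l1_dist) auto

lemma l1_infdist_lessE:
  assumes "S \<noteq> {}" "l1_infdist k S y < r"
  obtains a where "a \<in> S" "l1_dist k a y < r"
  using assms cInf_lessD[of "(\<lambda>a. l1_dist k a y) ` S" r] unfolding l1_infdist_def by blast

lemma continuous_on_l1_infdist:
  assumes "S \<noteq> {}"
  shows "continuous_on UNIV (l1_infdist k S)"
proof (rule continuous_on_l1_lipschitz)
  have *: "l1_infdist k S y \<le> l1_infdist k S y' + l1_dist k y y'" for y y'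
  proof -
    have "l1_infdist k S y - l1_dist k y y' \<le> l1_infdist k S y'"
      unfolding l1_infdist_def[of k S y']
    proof (rule cInf_greatest)
      fix t assume "t \<in> (\<lambda>a. l1_dist k a y') ` S"
      then obtain a where a: "a \<in> S" "t = l1_dist k a y'" by blast
      have "l1_infdist k S y \<le> l1_dist k a y" by (rule l1_infdist_le[OF a(1)])
      also have "\<dots> \<le> l1_dist k a y' + l1_dist k y' y" by (rule l1_dist_triangle)
      finally show "l1_infdist k S y - l1_dist k y y' \<le> t" using a by (simp add: l1_dist_commute)
    qed (use assms in simp)
    then show ?thesis by simp
  qed
  show "\<bar>l1_infdist k S y - l1_infdist k S y'\<bar> \<le> l1_dist k y y'" for y y'
    using *[of y y'] *[of y' y] by (simp add: l1_dist_commute abs_le_iff)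
qed

lemma (in prob_space) exists_prob_gt_of_incseq_cover:
  assumes F: "range F \<subseteq> events" "incseq F" and cover: "AE x in M. x \<in> A \<longrightarrow> x \<in> (\<Union>j. F j)"
    and "e > 0"
  obtains j where "prob A - e < prob (F j)"
proof -
  have "prob A \<le> prob (\<Union>j. F j)" using F cover by (intro finite_measure_mono_AE) auto
  moreover have "(\<lambda>j. prob (F j)) \<longlonglongrightarrow> prob (\<Union>j. F j)"
    using F by (intro Lim_measure_incseq) auto
  then have "\<forall>\<^sub>F j in sequentially. prob (\<Union>j. F j) - e < prob (F j)"
    using \<open>e > 0\<close> by (intro order_tendstoD(1)) auto
  then obtain j where "prob (\<Union>j. F j) - e < prob (F j)" by (auto simp: eventually_sequentially)
  ultimately show ?thesis using that by (meson diff_right_mono le_less_trans)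
qed

lemma eventually_measure_gt_of_minorant:
  fixes g :: "'c::topological_space \<Rightarrow> real"
  assumes prob: "\<And>n. prob_space (M n)" and prob0: "prob_space M0"
    and Y: "\<And>n. Y n \<in> borel_measurable (M n)" and Y0: "Y0 \<in> borel_measurable M0"
    and g: "continuous_on UNIV g" "\<And>y. 0 \<le> g y" "\<And>y. g y \<le> 1"
    and conv: "(\<lambda>n. \<integral>\<omega>. g (Y n \<omega>) \<partial>M n) \<longlonglongrightarrow> (\<integral>\<omega>. g (Y0 \<omega>) \<partial>M0)"
    and F: "F \<in> sets M0" "\<And>\<omega>. \<omega> \<in> F \<Longrightarrow> g (Y0 \<omega>) = 1"
    and B: "\<And>n. {\<omega> \<in> space (M n). Y n \<omega> \<in> B n} \<in> sets (M n)"
    and g_B: "\<forall>\<^sub>F n in sequentially. \<forall>y. 0 < g y \<longrightarrow> y \<in> B n"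
    and "e > 0"
  shows "\<forall>\<^sub>F n in sequentially. measure M0 F - e < measure (M n) {\<omega> \<in> space (M n). Y n \<omega> \<in> B n}"
proof -
  have gm: "g \<in> borel_measurable borel" using g(1) by (rule borel_measurable_continuous_onI)
  have lower: "measure M0 F \<le> (\<integral>\<omega>. g (Y0 \<omega>) \<partial>M0)"
  proof -
    interpret prob_space M0 by (rule prob0)
    have "measure M0 F = (\<integral>\<omega>. indicator F \<omega> \<partial>M0)" using F(1) by simp
    also have "\<dots> \<le> (\<integral>\<omega>. g (Y0 \<omega>) \<partial>M0)"
      using F g gm Y0 by (intro integral_mono integrable_const_bound[of _ 1]) (auto simp: indicator_def)
    finally show ?thesis .
  qed
  have ev: "\<forall>\<^sub>F n in sequentially. (\<integral>\<omega>. g (Y0 \<omega>) \<partial>M0) - e < (\<integral>\<omega>. g (Y n \<omega>) \<partial>M n)"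
    using \<open>e > 0\<close> by (intro order_tendstoD(1)[OF conv]) simp
  have upper: "(\<integral>\<omega>. g (Y n \<omega>) \<partial>M n) \<le> measure (M n) {\<omega> \<in> space (M n). Y n \<omega> \<in> B n}"
    if "\<forall>y. 0 < g y \<longrightarrow> y \<in> B n" for n
  proof -
    interpret prob_space "M n" by (rule prob)
    have "(\<integral>\<omega>. g (Y n \<omega>) \<partial>M n) \<le> (\<integral>\<omega>. indicator {\<omega> \<in> space (M n). Y n \<omega> \<in> B n} \<omega> \<partial>M n)"
      using B g gm Y that
      by (intro integral_mono integrable_const_bound[of _ 1]) (auto simp: indicator_def not_less)
    also have "\<dots> = measure (M n) {\<omega> \<in> space (M n). Y n \<omega> \<in> B n}" using B by simp
    finally show ?thesis .
  qed
  from ev g_B show ?thesis by eventually_elim (use lower upper in fastforce)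
qed

lemma eventually_measure_gt_of_robust:
  fixes Y :: "nat \<Rightarrow> 'a \<Rightarrow> nat \<Rightarrow> real" and Y0 :: "'b \<Rightarrow> nat \<Rightarrow> real"
  assumes prob: "\<And>n. prob_space (M n)" and prob0: "prob_space M0"
    and Y: "\<And>n. Y n \<in> borel_measurable (M n)" and Y0: "Y0 \<in> borel_measurable M0"
    and conv: "\<And>g :: (nat \<Rightarrow> real) \<Rightarrow> real. continuous_on UNIV g \<Longrightarrow> bounded (range g) \<Longrightarrow>
       (\<lambda>n. \<integral>\<omega>. g (Y n \<omega>) \<partial>M n) \<longlonglongrightarrow> (\<integral>\<omega>. g (Y0 \<omega>) \<partial>M0)"
    and B: "\<And>n. {\<omega> \<in> space (M n). Y n \<omega> \<in> B n} \<in> sets (M n)"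
    and AE: "AE \<omega> in M0. Y0 \<omega> \<in> G"
    and robust: "\<And>x. x \<in> A \<Longrightarrow> x \<in> G \<Longrightarrow> \<exists>\<epsilon>>0. \<forall>\<^sub>F n in sequentially. \<forall>y. l1_dist k x y < \<epsilon> \<longrightarrow> y \<in> B n"
    and "e > 0"
  shows "\<forall>\<^sub>F n in sequentially.
    measure M0 {\<omega> \<in> space M0. Y0 \<omega> \<in> A} - e < measure (M n) {\<omega> \<in> space (M n). Y n \<omega> \<in> B n}"
proof -
  interpret M0: prob_space M0 by (rule prob0)
  txt \<open>The sets \<open>R j\<close> of points robust at radius \<open>1 / Suc j\<close> from \<open>j\<close> on exhaust \<open>A \<inter> G\<close>; the
    cutoff \<open>g\<close> below is \<open>1\<close> on the closure of \<open>R j\<close> and vanishes off its \<open>1 / Suc j\<close>-neighbourhood,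
    which lies in every \<open>B n\<close> with \<open>n \<ge> j\<close>.\<close>
  define R where "R j = {x \<in> A \<inter> G. \<forall>n\<ge>j. \<forall>y. l1_dist k x y < 1 / Suc j \<longrightarrow> y \<in> B n}" for j
  define F where "F j = {\<omega> \<in> space M0. R j \<noteq> {} \<and> l1_infdist k (R j) (Y0 \<omega>) = 0}" for j
  have R_mono: "R j \<subseteq> R (Suc j)" for j
  proof
    fix x assume "x \<in> R j"
    then have x: "x \<in> A \<inter> G" "\<And>n y. j \<le> n \<Longrightarrow> l1_dist k x y < 1 / Suc j \<Longrightarrow> y \<in> B n"
      by (auto simp: R_def)
    have "1 / real (Suc (Suc j)) \<le> 1 / Suc j" by (simp add: frac_le)
    then have "y \<in> B n" if "Suc j \<le> n" "l1_dist k x y < 1 / Suc (Suc j)" for n y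
      using that by (intro x(2)) auto
    then show "x \<in> R (Suc j)" using x(1) unfolding R_def by blast
  qed
  have "incseq F"
  proof (rule incseq_SucI)
    fix j show "F j \<subseteq> F (Suc j)"
    proof
      fix \<omega> assume "\<omega> \<in> F j"
      then have \<omega>: "\<omega> \<in> space M0" "R j \<noteq> {}" "l1_infdist k (R j) (Y0 \<omega>) = 0" by (simp_all add: F_def)
      then have "R (Suc j) \<noteq> {}" using R_mono by blast
      moreover have "l1_infdist k (R (Suc j)) (Y0 \<omega>) = 0"
        using l1_infdist_antimono[OF \<omega>(2) R_mono, where k = k and y = "Y0 \<omega>"] l1_infdist_nonneg[OF \<open>R (Suc j) \<noteq> {}\<close>, of k]
          \<omega>(3) by (intro antisym) auto
      ultimately show "\<omega> \<in> F (Suc j)" using \<omega>(1) by (simp add: F_def)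
    qed
  qed
  have F_sets: "F j \<in> sets M0" for j
  proof (cases "R j = {}")
    case False
    have "(\<lambda>\<omega>. l1_infdist k (R j) (Y0 \<omega>)) \<in> borel_measurable M0"
      using measurable_compose[OF Y0 borel_measurable_continuous_onI[OF continuous_on_l1_infdist[OF False]]] .
    then show ?thesis using False unfolding F_def by measurable
  qed (simp add: F_def)
  have cover: "AE \<omega> in M0. \<omega> \<in> {\<omega> \<in> space M0. Y0 \<omega> \<in> A} \<longrightarrow> \<omega> \<in> (\<Union>j. F j)"
    using AE
  proof eventually_elim
    case (elim \<omega>)
    show ?case
    proof
      assume \<omega>: "\<omega> \<in> {\<omega> \<in> space M0. Y0 \<omega> \<in> A}"
      with elim obtain \<epsilon> N where "\<epsilon> > 0" and N: "\<forall>n\<ge>N. \<forall>y. l1_dist k (Y0 \<omega>) y < \<epsilon> \<longrightarrow> y \<in> B n"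
        using robust[of "Y0 \<omega>"] by (auto simp: eventually_sequentially)
      obtain m where "1 / Suc m < \<epsilon>" using \<open>\<epsilon> > 0\<close> by (metis nat_approx_posE)
      define j where "j = max N m"
      have "1 / real (Suc j) \<le> 1 / Suc m" by (simp add: j_def frac_le)
      then have "Y0 \<omega> \<in> R j" using N \<omega> elim \<open>1 / Suc m < \<epsilon>\<close> unfolding R_def j_def by force
      then have "\<omega> \<in> F j" using \<omega> l1_infdist_zero unfolding F_def by fastforce
      then show "\<omega> \<in> (\<Union>j. F j)" by blast
    qed
  qed
  obtain j where j: "measure M0 {\<omega> \<in> space M0. Y0 \<omega> \<in> A} - e / 2 < measure M0 (F j)"
    by (rule M0.exists_prob_gt_of_incseq_cover[OF _ \<open>incseq F\<close> cover, where e = "e / 2"]) (use F_sets \<open>e > 0\<close> in auto)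
  show ?thesis
  proof (cases "R j = {}")
    case True
    then have "measure M0 {\<omega> \<in> space M0. Y0 \<omega> \<in> A} - e < 0" using j \<open>e > 0\<close> by (simp add: F_def)
    then show ?thesis by (intro always_eventually allI) (meson less_le_trans measure_nonneg)
  next
    case False
    define g where "g y = max 0 (1 - Suc j * l1_infdist k (R j) y)" for y
    have g_cont: "continuous_on UNIV g"
      unfolding g_def by (intro continuous_intros continuous_on_l1_infdist False)
    have g_range: "0 \<le> g y" "g y \<le> 1" for y
      using l1_infdist_nonneg[OF False, of k y] by (auto simp: g_def)
    have "\<forall>\<^sub>F n in sequentially. \<forall>y. 0 < g y \<longrightarrow> y \<in> B n"
      using eventually_ge_at_top[of j]
    proof eventually_elim
      case (elim n)
      show ?case
      proof (intro allI impI)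
        fix y assume "0 < g y"
        then have "l1_infdist k (R j) y < 1 / Suc j" by (simp add: g_def field_simps)
        then obtain a where "a \<in> R j" "l1_dist k a y < 1 / Suc j" using False by (elim l1_infdist_lessE)
        then show "y \<in> B n" using elim unfolding R_def by blast
      qed
    qed
    moreover have "(\<lambda>n. \<integral>\<omega>. g (Y n \<omega>) \<partial>M n) \<longlonglongrightarrow> (\<integral>\<omega>. g (Y0 \<omega>) \<partial>M0)"
      using g_range by (intro conv g_cont boundedI[of _ 1]) auto
    ultimately have "\<forall>\<^sub>F n in sequentially.
        measure M0 (F j) - e / 2 < measure (M n) {\<omega> \<in> space (M n). Y n \<omega> \<in> B n}"
      using \<open>e > 0\<close> F_sets g_range B
      by (intro eventually_measure_gt_of_minorant[OF prob prob0 Y Y0 g_cont]) (auto simp: F_def g_def)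
    then show ?thesis by eventually_elim (use j in linarith)
  qed
qed

section \<open>Vectors with a density are almost surely generic\<close>

lemma null_sets_PiM_lborel_coordinate:
  fixes I :: "'i set"
  assumes "finite I" "i \<in> I" "countable E"
  shows "{x \<in> space (PiM I (\<lambda>_. lborel)). x i \<in> E} \<in> null_sets (PiM I (\<lambda>_. lborel :: real measure))"
proof -
  interpret product_sigma_finite "\<lambda>_::'i. lborel :: real measure" ..
  define C where "C l = (if l = i then E else UNIV)" for l
  have E: "E \<in> null_sets lborel" using assms(3) by (rule countable_imp_null_set_lborel)
  then have C: "C l \<in> sets lborel" for l by (auto simp: C_def)
  have "{x \<in> space (PiM I (\<lambda>_. lborel)). x i \<in> E} = PiE I C"
    using assms(2) by (auto simp: C_def space_PiM PiE_iff extensional_def split: if_splits)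
  moreover have "emeasure (PiM I (\<lambda>_. lborel)) (PiE I C) = (\<Prod>l\<in>I. emeasure lborel (C l))"
    using assms(1) C by (intro emeasure_PiM) auto
  moreover have "(\<Prod>l\<in>I. emeasure lborel (C l)) = 0"
    using assms(1,2) E by (intro prod_zero bexI[of _ i]) (auto simp: C_def)
  ultimately show ?thesis using C by (auto intro!: sets_PiM_I_finite assms(1))
qed

lemma null_sets_PiM_lborel_diagonal:
  fixes I :: "'i set"
  assumes "finite I" "i \<in> I" "j \<in> I" "i \<noteq> j"
  shows "{x \<in> space (PiM I (\<lambda>_. lborel)). x i = x j} \<in> null_sets (PiM I (\<lambda>_. lborel :: real measure))"
proof -
  interpret product_sigma_finite "\<lambda>_::'i. lborel :: real measure" ..
  define J where "J = I - {i}"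
  have J: "insert i J = I" "finite J" "i \<notin> J" "j \<in> J" using assms unfolding J_def by auto
  define N where "N = {x \<in> space (PiM I (\<lambda>_. lborel)). x i = (x j :: real)}"
  have N: "N \<in> sets (PiM I (\<lambda>_. lborel))" unfolding N_def using assms(2,3) by measurable
  have "emeasure (PiM I (\<lambda>_. lborel)) N = (\<integral>\<^sup>+ x. indicator N x \<partial>PiM (insert i J) (\<lambda>_. lborel))"
    using N J(1) by simp
  also have "\<dots> = (\<integral>\<^sup>+ x. (\<integral>\<^sup>+ y. indicator N (x(i := y)) \<partial>lborel) \<partial>PiM J (\<lambda>_. lborel))"
    using N J by (intro product_nn_integral_insert) auto
  also have "\<dots> = (\<integral>\<^sup>+ x. 0 \<partial>PiM J (\<lambda>_. lborel :: real measure))"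
  proof (rule nn_integral_cong)
    fix x assume "x \<in> space (PiM J (\<lambda>_. lborel :: real measure))"
    then have "x(i := y) \<in> space (PiM I (\<lambda>_. lborel))" for y
      using J(1) by (auto simp: space_PiM PiE_iff extensional_def)
    then have "(\<lambda>y. indicator N (x(i := y)) :: ennreal) = indicator {x j}"
      using assms(4) by (auto simp: N_def indicator_def)
    then show "(\<integral>\<^sup>+ y. indicator N (x(i := y)) \<partial>lborel) = 0" by simp
  qed
  also have "\<dots> = 0" by simp
  finally show ?thesis using N unfolding N_def by auto
qed

lemma AE_generic_points:
  fixes X :: "'b \<Rightarrow> nat \<Rightarrow> real"
  assumes meas: "\<And>i. i \<in> {1..k} \<Longrightarrow> (\<lambda>\<omega>. X \<omega> i) \<in> borel_measurable M"
    and range: "\<And>i \<omega>. i \<in> {1..k} \<Longrightarrow> \<omega> \<in> space M \<Longrightarrow> X \<omega> i \<in> {0..1}"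
    and f: "f \<in> borel_measurable (PiM {1..k} (\<lambda>_. lborel))"
    and density: "distr M (PiM {1..k} (\<lambda>_. lborel)) (\<lambda>\<omega>. restrict (X \<omega>) {1..k})
      = density (PiM {1..k} (\<lambda>_. lborel)) f"
  shows "AE \<omega> in M. vec_emb k (X \<omega>) \<in> generic_points U k"
proof -
  let ?P = "PiM {1..k} (\<lambda>_. lborel :: real measure)"
  define E where "E = edge_points (fst U) \<union> edge_points (snd U)"
  define N where "N = (\<Union>i\<in>{1..k}. {x \<in> space ?P. x i \<in> E}) \<union>
    (\<Union>p\<in>{p \<in> {1..k} \<times> {1..k}. fst p \<noteq> snd p}. {x \<in> space ?P. x (fst p) = x (snd p)})"
  have "countable E" by (simp add: E_def countable_edge_points)
  then have "N \<in> null_sets ?P" unfolding N_def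
    by (intro null_sets.Un null_sets_UN' null_sets_PiM_lborel_coordinate null_sets_PiM_lborel_diagonal)
      (auto intro: countable_finite)
  then have "AE x in ?P. x \<notin> N" by (rule AE_not_in)
  then have "AE x in density ?P f. x \<notin> N" by (subst AE_density[OF f]) (auto elim: eventually_mono)
  moreover have "(\<lambda>\<omega>. restrict (X \<omega>) {1..k}) \<in> measurable M ?P"
    using meas by (intro measurable_restrict) auto
  ultimately have "AE \<omega> in M. restrict (X \<omega>) {1..k} \<notin> N"
    using \<open>N \<in> null_sets ?P\<close> by (subst (asm) density[symmetric], subst (asm) AE_distr_iff) auto
  then show ?thesis
    using AE_space
  proof eventually_elim
    case (elim \<omega>)
    then show "vec_emb k (X \<omega>) \<in> generic_points U k"
      using range by (fastforce simp: N_def E_def generic_points_def vec_emb_def space_PiM)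
  qed
qed

section \<open>Convergence of the paintbox laws\<close>

lemma measurable_vec_emb:
  assumes "\<And>i. i \<in> {1..k} \<Longrightarrow> (\<lambda>\<omega>. X \<omega> i) \<in> borel_measurable M"
  shows "(\<lambda>\<omega>. vec_emb k (X \<omega>)) \<in> borel_measurable M"
  unfolding vec_emb_def
proof (rule measurable_coordinatewise_then_product)
  fix i show "(\<lambda>\<omega>. if i \<in> {1..k} then X \<omega> i else 0) \<in> borel_measurable M"
    using assms by (cases "i \<in> {1..k}") (simp_all only: if_P if_False borel_measurable_const)
qed

lemma tendsto_measure_of_eventually_gt:
  assumes prob: "\<And>n. prob_space (M n)" and prob0: "prob_space M0"
    and sets: "\<And>n. {\<omega> \<in> space (M n). P n \<omega>} \<in> sets (M n)" "{\<omega> \<in> space M0. P0 \<omega>} \<in> sets M0"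
    and lower: "\<And>e. e > 0 \<Longrightarrow> \<forall>\<^sub>F n in sequentially.
      measure M0 {\<omega> \<in> space M0. P0 \<omega>} - e < measure (M n) {\<omega> \<in> space (M n). P n \<omega>}"
    and lower_compl: "\<And>e. e > 0 \<Longrightarrow> \<forall>\<^sub>F n in sequentially.
      measure M0 {\<omega> \<in> space M0. \<not> P0 \<omega>} - e < measure (M n) {\<omega> \<in> space (M n). \<not> P n \<omega>}"
  shows "(\<lambda>n. measure (M n) {\<omega> \<in> space (M n). P n \<omega>}) \<longlonglongrightarrow> measure M0 {\<omega> \<in> space M0. P0 \<omega>}"
proof (rule tendstoI)
  have compl: "measure N {\<omega> \<in> space N. \<not> Q \<omega>} = 1 - measure N {\<omega> \<in> space N. Q \<omega>}"
    if "prob_space N" "{\<omega> \<in> space N. Q \<omega>} \<in> sets N" for N :: "'c measure" and Q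
  proof -
    have "{\<omega> \<in> space N. \<not> Q \<omega>} = space N - {\<omega> \<in> space N. Q \<omega>}" by blast
    then show ?thesis using prob_space.prob_compl[OF that] by simp
  qed
  fix e :: real assume "e > 0"
  from lower[OF this] lower_compl[OF this]
  show "\<forall>\<^sub>F n in sequentially. dist (measure (M n) {\<omega> \<in> space (M n). P n \<omega>}) (measure M0 {\<omega> \<in> space M0. P0 \<omega>}) < e"
    by eventually_elim (use compl[OF prob sets(1)] compl[OF prob0 sets(2)] in \<open>auto simp: dist_real_def\<close>)
qed

theorem proposition14:
  fixes Us :: "nat \<Rightarrow> real set \<times> real set" and U :: "real set \<times> real set"
    and M :: "nat \<Rightarrow> 'a measure" and X :: "nat \<Rightarrow> 'a \<Rightarrow> nat \<Rightarrow> real"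
    and M0 :: "'b measure" and X0 :: "'b \<Rightarrow> nat \<Rightarrow> real"
  assumes U_in: "\<And>n. Us n \<in> U2" and U0_in: "U \<in> U2"
    and U_conv: "(\<lambda>n. dU2 (Us n) U) \<longlonglongrightarrow> 0"
    and prob: "\<And>n. prob_space (M n)" and prob0: "prob_space M0"
    and meas: "\<And>n i. i \<ge> 1 \<Longrightarrow> (\<lambda>\<omega>. X n \<omega> i) \<in> borel_measurable (M n)"
    and meas0: "\<And>i. i \<ge> 1 \<Longrightarrow> (\<lambda>\<omega>. X0 \<omega> i) \<in> borel_measurable M0"
    and range: "\<And>n i \<omega>. i \<ge> 1 \<Longrightarrow> \<omega> \<in> space (M n) \<Longrightarrow> X n \<omega> i \<in> {0..1}"
    and range0: "\<And>i \<omega>. i \<ge> 1 \<Longrightarrow> \<omega> \<in> space M0 \<Longrightarrow> X0 \<omega> i \<in> {0..1}"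
    and dens: "\<And>n k. k \<ge> 1 \<Longrightarrow> \<exists>f. f \<in> borel_measurable (PiM {1..k} (\<lambda>_. lborel)) \<and>
         distr (M n) (PiM {1..k} (\<lambda>_. lborel)) (\<lambda>\<omega>. restrict (X n \<omega>) {1..k})
           = density (PiM {1..k} (\<lambda>_. lborel)) f"
    and dens0: "\<And>k. k \<ge> 1 \<Longrightarrow> \<exists>f. f \<in> borel_measurable (PiM {1..k} (\<lambda>_. lborel)) \<and>
         distr M0 (PiM {1..k} (\<lambda>_. lborel)) (\<lambda>\<omega>. restrict (X0 \<omega>) {1..k})
           = density (PiM {1..k} (\<lambda>_. lborel)) f"
    and law_conv: "\<And>k (g :: (nat \<Rightarrow> real) \<Rightarrow> real). k \<ge> 1 \<Longrightarrow> continuous_on UNIV g \<Longrightarrow> bounded (range g) \<Longrightarrow>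
         (\<lambda>n. integral\<^sup>L (M n) (\<lambda>\<omega>. g (vec_emb k (X n \<omega>))))
           \<longlonglongrightarrow> integral\<^sup>L M0 (\<lambda>\<omega>. g (vec_emb k (X0 \<omega>)))"
  shows "\<forall>k\<ge>1. \<forall>w :: nat list.
           (\<lambda>n. measure (M n) {\<omega> \<in> space (M n). paintbox (Us n) k (X n \<omega>) = w})
             \<longlonglongrightarrow> measure M0 {\<omega> \<in> space M0. paintbox U k (X0 \<omega>) = w}"
proof (intro allI impI)
  fix k :: nat and w :: "nat list" assume "1 \<le> k"
  have X: "\<And>n. (\<lambda>\<omega>. vec_emb k (X n \<omega>)) \<in> borel_measurable (M n)"
    and X0: "(\<lambda>\<omega>. vec_emb k (X0 \<omega>)) \<in> borel_measurable M0"
    using meas meas0 by (auto intro!: measurable_vec_emb)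
  have generic: "AE \<omega> in M0. vec_emb k (X0 \<omega>) \<in> generic_points U k"
    using dens0[OF \<open>1 \<le> k\<close>] meas0 range0 by (auto intro!: AE_generic_points)
  have events: "{\<omega> \<in> space (M n). paintbox (Us n) k (X n \<omega>) \<in> S} \<in> sets (M n)" for n S
    using meas by (intro sets_Collect_paintbox[OF U_in]) auto
  have robust: "\<exists>\<epsilon>>0. \<forall>\<^sub>F n in sequentially. \<forall>y. l1_dist k x y < \<epsilon> \<longrightarrow> paintbox (Us n) k y \<in> S"
    if x_S: "paintbox U k x \<in> S" and x: "x \<in> generic_points U k" for x S
  proof -
    obtain \<epsilon> where "\<epsilon> > 0" and
      "\<forall>\<^sub>F n in sequentially. \<forall>y. l1_dist k x y < \<epsilon> \<longrightarrow> paintbox (Us n) k y = paintbox U k x"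
      using paintbox_locally_constant[OF U0_in U_in U_conv x] by blast
    then show ?thesis using x_S by (auto elim!: eventually_mono)
  qed
  have lower: "\<forall>\<^sub>F n in sequentially. measure M0 {\<omega> \<in> space M0. paintbox U k (X0 \<omega>) \<in> S} - e
      < measure (M n) {\<omega> \<in> space (M n). paintbox (Us n) k (X n \<omega>) \<in> S}" if "e > 0" for S e
    using eventually_measure_gt_of_robust[OF prob prob0 X X0 law_conv[OF \<open>1 \<le> k\<close>] _ generic _ that,
        where k = k and A = "{y. paintbox U k y \<in> S}" and B = "\<lambda>n. {y. paintbox (Us n) k y \<in> S}"]
      events robust by (simp add: paintbox_vec_emb)
  show "(\<lambda>n. measure (M n) {\<omega> \<in> space (M n). paintbox (Us n) k (X n \<omega>) = w})
      \<longlonglongrightarrow> measure M0 {\<omega> \<in> space M0. paintbox U k (X0 \<omega>) = w}"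
    using events[of _ "{w}"] sets_Collect_paintbox[OF U0_in, of k X0 M0 "{w}"] meas0
      lower[of _ "{w}"] lower[of _ "- {w}"]
    by (intro tendsto_measure_of_eventually_gt[OF prob prob0]) auto
qed

end
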